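(* Let $n\ge1$ and let $C$ be the $n\times n$ matrix with entries in $OPol_n$ whose $(i,i-1)$-entry is $1$ for $2\le i\le n$, whose $(i,n)$-entry is $(-1)^{n-i}e^{(n)}_{n+1-i}$ for $1\le i\le n$, and all other entries $0$ (the non-commutative companion matrix of $(t-x_1)\cdots(t-x_n)$). Then for all $1\le i,j\le n$ and $k\ge0$, the $(i,j)$-entry of $C^k$ (matrix multiplication in the given order in the non-commutative ring $OPol_n$) equals $$c_{i,j;k}:=\sum_{t=0}^{\min(k+j-i,\,n-i)}(-1)^te^{(n)}_th^{(n)}_{k+j-i-t},$$ which is $0$ if $k<i-j$ and $1$ if $k=i-j$.
   Context: $\Bbbk$ is a field of characteristic $\neq2$. $OPol_n$ is the graded superalgebra generated by odd degree-2 elements $x_1,\dots,x_n$ with $x_jx_i=-x_ix_j$ ($i\ne j$). $e_r^{(n)}:=\sum_{1\le i_1<\cdots<i_r\le n}x_{i_1}\cdots x_{i_r}$ and $h_r^{(n)}:=\sum_{n\ge i_r\ge\cdots\ge i_1\ge1}x_{i_r}\cdots x_{i_1}$ for $r\ge0$, with $e_0^{(n)}=h_0^{(n)}=1$, and $h^{(n)}_r:=0$ for $r<0$. *)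

theory Defs
  imports Main
begin

text \<open>Concrete model of OPol_n: an element is a coefficient function on exponent
vectors a :: nat => nat, standing for the linear combination of ordered monomials
x_1^(a 1) x_2^(a 2) ... x_n^(a n).  Multiplication of ordered monomials uses the
relations x_j x_i = - x_i x_j (i ~= j): moving the letters of the right factor
past the larger-index letters of the left factor gives the sign
(-1)^(sum over i > j of a i * b j).\<close>

type_synonym 'k opol = "(nat \<Rightarrow> nat) \<Rightarrow> 'k"

definition ozero :: "'k::field opol" where
  "ozero = (\<lambda>_. 0)"

definition oone :: "'k::field opol" where
  "oone = (\<lambda>a. if a = (\<lambda>_. 0) then 1 else 0)"

definition ogen :: "nat \<Rightarrow> 'k::field opol" where
  "ogen i = (\<lambda>a. if a = (\<lambda>l. if l = i then 1 else 0) then 1 else 0)"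

definition oadd :: "'k::field opol \<Rightarrow> 'k opol \<Rightarrow> 'k opol" where
  "oadd f g = (\<lambda>a. f a + g a)"

definition oscale :: "'k::field \<Rightarrow> 'k opol \<Rightarrow> 'k opol" where
  "oscale c f = (\<lambda>a. c * f a)"

definition osum :: "('b \<Rightarrow> 'k::field opol) \<Rightarrow> 'b set \<Rightarrow> 'k opol" where
  "osum F A = (\<lambda>a. \<Sum>x\<in>A. F x a)"

definition osign :: "nat \<Rightarrow> (nat \<Rightarrow> nat) \<Rightarrow> (nat \<Rightarrow> nat) \<Rightarrow> 'k::field" where
  "osign n a b = (-1) ^ (\<Sum>i\<in>{1..n}. \<Sum>j\<in>{1..<i}. a i * b j)"

definition omul :: "nat \<Rightarrow> 'k::field opol \<Rightarrow> 'k opol \<Rightarrow> 'k opol" where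
  "omul n f g = (\<lambda>c. \<Sum>p\<in>{(a, b). \<forall>l. a l + b l = c l}.
      osign n (fst p) (snd p) * f (fst p) * g (snd p))"

definition oprod :: "nat \<Rightarrow> nat list \<Rightarrow> 'k::field opol" where
  "oprod n xs = foldr (\<lambda>i acc. omul n (ogen i) acc) xs oone"

definition oe :: "nat \<Rightarrow> nat \<Rightarrow> 'k::field opol" where
  "oe n r = osum (\<lambda>S. oprod n (sorted_list_of_set S)) {S. S \<subseteq> {1..n} \<and> card S = r}"

definition oh :: "nat \<Rightarrow> int \<Rightarrow> 'k::field opol" where
  "oh n r = (if r < 0 then ozero else
     osum (\<lambda>xs. oprod n (rev xs))
       {xs. length xs = nat r \<and> sorted xs \<and> set xs \<subseteq> {1..n}})"

type_synonym 'k omat = "nat \<Rightarrow> nat \<Rightarrow> 'k opol"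

definition omatmul :: "nat \<Rightarrow> 'k::field omat \<Rightarrow> 'k omat \<Rightarrow> 'k omat" where
  "omatmul n A B = (\<lambda>i j. osum (\<lambda>l. omul n (A i l) (B l j)) {1..n})"

definition omatid :: "'k::field omat" where
  "omatid = (\<lambda>i j. if i = j then oone else ozero)"

primrec omatpow :: "nat \<Rightarrow> 'k::field omat \<Rightarrow> nat \<Rightarrow> 'k omat" where
  "omatpow n A 0 = omatid"
| "omatpow n A (Suc k) = omatmul n (omatpow n A k) A"

definition ocomp :: "nat \<Rightarrow> 'k::field omat" where
  "ocomp n = (\<lambda>i j. if j = n then oscale ((-1) ^ (n - i)) (oe n (n + 1 - i))
                    else if 2 \<le> i \<and> j = i - 1 then oone else ozero)"

definition oc :: "nat \<Rightarrow> nat \<Rightarrow> nat \<Rightarrow> nat \<Rightarrow> 'k::field opol" where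
  "oc n i j k = osum (\<lambda>t. oscale ((-1) ^ nat t) (omul n (oe n (nat t)) (oh n (int k + int j - int i - t))))
      {0 .. min (int k + int j - int i) (int n - int i)}"

end

theory Submission
  imports Defs "HOL-Library.Function_Algebras"
begin

text \<open>Right
  multiplication by \<open>C\<close> shifts every column but the last, so the induction on \<open>k\<close> only has to
  treat the last column, where the recurrence \<open>h_q = \<Sum>r\<ge>1. (-1)^(r-1) h_(q-r) e_r\<close> for
  \<open>q \<ge> 1\<close> collapses the sum over \<open>l\<close>. This recurrence, and the vanishing above the diagonal
  for \<open>k = 0\<close>, are the non-commutative identities \<open>\<Sum>r. (-1)^r h_(q-r) e_r = 0\<close> and
  \<open>\<Sum>t. (-1)^t e_t h_(m-t) = 0\<close> for \<open>q, m \<ge> 1\<close>. Expanded into ordered monomials, each follows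
  from a sign-reversing involution on pairs of a weakly and a strictly increasing word that
  moves the letter at the junction of the product word from one factor to the other; this is
  where \<open>2 \<noteq> 0\<close> is needed. Associativity of \<open>OPol_n\<close> holds because the sign
  \<open>(-1)^(\<Sum>i>j. a_i b_j)\<close> is bimultiplicative in the exponent vectors.\<close>

lemma sum_fun_apply: "(sum F A :: 'a \<Rightarrow> 'b::comm_monoid_add) x = (\<Sum>a\<in>A. F a x)"
  by (induction A rule: infinite_finite_induct) auto

lemma osum_eq_sum: "osum F A = sum F A"
  by (auto simp: osum_def sum_fun_apply)

lemma ozero_eq_zero: "ozero = 0"
  by (auto simp: ozero_def)

definition finite_support :: "(nat \<Rightarrow> nat) \<Rightarrow> bool" where
  "finite_support a \<longleftrightarrow> finite {l. a l \<noteq> 0}"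

definition splittings :: "(nat \<Rightarrow> nat) \<Rightarrow> ((nat \<Rightarrow> nat) \<times> (nat \<Rightarrow> nat)) set" where
  "splittings c = {(a, b). \<forall>l. a l + b l = c l}"

lemma omul_eq_sum_splittings:
  "omul n f g c = (\<Sum>(a, b)\<in>splittings c. osign n a b * f a * g b)"
  by (simp add: omul_def splittings_def case_prod_beta)

lemma finite_support_le:
  assumes "finite_support c" "\<And>l. a l \<le> c l"
  shows "finite_support a"
proof -
  have "{l. a l \<noteq> 0} \<subseteq> {l. c l \<noteq> 0}"
  proof (rule Collect_mono, rule impI)
    fix l assume "a l \<noteq> 0"
    then show "c l \<noteq> 0" using assms(2)[of l] by linarith
  qed
  with assms(1) show ?thesis
    unfolding finite_support_def by (rule finite_subset[rotated])
qed

lemma finite_splittings: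
  assumes "finite_support c"
  shows "finite (splittings c)"
proof -
  let ?S = "{l. c l \<noteq> 0}"
  let ?F = "{a. \<forall>l. (l \<in> ?S \<longrightarrow> a l \<in> {0..Max (c ` ?S)}) \<and> (l \<notin> ?S \<longrightarrow> a l = 0)}"
  have "finite ?F"
    using assms by (intro finite_set_of_finite_funs) (auto simp: finite_support_def)
  moreover have "splittings c \<subseteq> (\<lambda>a. (a, \<lambda>l. c l - a l)) ` ?F"
  proof
    fix p assume "p \<in> splittings c"
    then obtain a b where p: "p = (a, b)" and ab: "\<And>l. a l + b l = c l"
      by (auto simp: splittings_def)
    have "a l \<le> Max (c ` ?S)" if "c l \<noteq> 0" for l
      using assms that ab[of l] by (intro Max.coboundedI[THEN le_trans[rotated]])
        (auto simp: finite_support_def le_add1)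
    moreover have "a l = 0" if "c l = 0" for l
      using ab[of l] that by simp
    moreover have "b = (\<lambda>l. c l - a l)"
      using ab by (metis add_diff_cancel_left')
    ultimately show "p \<in> (\<lambda>a. (a, \<lambda>l. c l - a l)) ` ?F"
      using p by auto
  qed
  ultimately show ?thesis by (rule finite_surj)
qed

text \<open>So the sum defining \<open>omul\<close>, taken over an infinite set, is the junk value \<open>0\<close> at exponent vectors of infinite
  support.\<close>
lemma infinite_splittings:
  assumes "\<not> finite_support c"
  shows "infinite (splittings c)"
proof
  assume fin: "finite (splittings c)"
  let ?S = "{l. c l \<noteq> 0}"
  let ?g = "\<lambda>l. (\<lambda>m. if m = l then c l else 0, \<lambda>m. if m = l then 0 else c m)"
  have "inj_on ?g ?S"
  proof (rule inj_onI)
    fix x y assume "x \<in> ?S" "?g x = ?g y"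
    then have "fst (?g x) x = fst (?g y) x" by simp
    then have "c x = (if x = y then c y else 0)" by simp
    with \<open>x \<in> ?S\<close> show "x = y" by (cases "x = y") auto
  qed
  moreover have "?g ` ?S \<subseteq> splittings c"
    by (auto simp: splittings_def)
  ultimately have "finite ?S"
    using finite_subset[OF _ fin] finite_imageD by blast
  with assms show False
    by (simp add: finite_support_def)
qed

definition finitary :: "'k::field opol \<Rightarrow> bool" where
  "finitary f \<longleftrightarrow> (\<forall>c. \<not> finite_support c \<longrightarrow> f c = 0)"

lemma finitary_omul: "finitary (omul n f g)"
  using infinite_splittings by (auto simp: finitary_def omul_eq_sum_splittings)

lemma finitary_sum: "(\<And>x. x \<in> A \<Longrightarrow> finitary (F x)) \<Longrightarrow> finitary (sum F A)"
  by (auto simp: finitary_def sum_fun_apply)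

lemma finitary_oscale: "finitary f \<Longrightarrow> finitary (oscale c f)"
  by (auto simp: finitary_def oscale_def)

lemma finitary_oone: "finitary oone"
  by (auto simp: finitary_def oone_def finite_support_def)

lemma osign_add_left: "osign n (\<lambda>l. a l + b l) c = osign n a c * osign n b c"
  by (simp add: osign_def distrib_right sum.distrib power_add)

lemma osign_add_right: "osign n a (\<lambda>l. b l + c l) = osign n a b * osign n a c"
  by (simp add: osign_def distrib_left sum.distrib power_add)

lemma splittings_sum: "(a, b) \<in> splittings c \<Longrightarrow> c = (\<lambda>l. a l + b l)"
  by (auto simp: splittings_def)

lemma finite_splittings_of_splitting:
  assumes "finite_support d" "(a, b) \<in> splittings d"
  shows "finite (splittings a)" "finite (splittings b)"
proof -
  have "a l + b l = d l" for l
    using assms(2) by (simp add: splittings_def)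
  then have "a l \<le> d l" "b l \<le> d l" for l
    by (metis le_add1, metis le_add2)
  then show "finite (splittings a)" "finite (splittings b)"
    using assms(1) by (meson finite_splittings finite_support_le)+
qed

text \<open>Both products at \<open>d\<close> are sums over the triples \<open>a + b + c = d\<close>; the two sign factors
  agree because \<open>osign\<close> is bimultiplicative.\<close>
lemma omul_assoc: "omul n (omul n f g) h = omul n f (omul n g h)"
proof
  fix d
  show "omul n (omul n f g) h d = omul n f (omul n g h) d"
  proof (cases "finite_support d")
    case False
    then show ?thesis
      using finitary_omul[of n "omul n f g" h] finitary_omul[of n f "omul n g h"]
      by (simp add: finitary_def)
  next
    case True
    let ?T = "{(a, b, c). \<forall>l. a l + b l + c l = d l}"
    let ?t = "\<lambda>(a, b, c). osign n a b * osign n a c * osign n b c * f a * g b * h c"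
    have split_left: "osign n e c * omul n f g e * h c = (\<Sum>(a, b)\<in>splittings e. ?t (a, b, c))" for e c
      unfolding omul_eq_sum_splittings sum_distrib_left sum_distrib_right
      by (rule sum.cong) (auto dest!: splittings_sum simp: osign_add_left mult_ac)
    have split_right: "osign n a e * f a * omul n g h e = (\<Sum>(b, c)\<in>splittings e. ?t (a, b, c))" for a e
      unfolding omul_eq_sum_splittings sum_distrib_left sum_distrib_right
      by (rule sum.cong) (auto dest!: splittings_sum simp: osign_add_right mult_ac)
    have "omul n (omul n f g) h d
        = (\<Sum>p\<in>splittings d. \<Sum>q\<in>splittings (fst p). ?t (fst q, snd q, snd p))"
      unfolding omul_eq_sum_splittings[of n _ h] by (simp add: split_left split_def)
    also have "\<dots> = (\<Sum>(p, q)\<in>Sigma (splittings d) (\<lambda>p. splittings (fst p)). ?t (fst q, snd q, snd p))"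
      using finite_splittings[OF True] finite_splittings_of_splitting[OF True]
      by (intro sum.Sigma) auto
    also have "\<dots> = sum ?t ?T"
      by (rule sum.reindex_bij_witness[where i = "\<lambda>(a, b, c). ((\<lambda>l. a l + b l, c), (a, b))"
            and j = "\<lambda>(p, q). (fst q, snd q, snd p)"])
        (auto simp: splittings_def)
    also have "\<dots> = (\<Sum>(p, q)\<in>Sigma (splittings d) (\<lambda>p. splittings (snd p)). ?t (fst p, fst q, snd q))"
      by (rule sum.reindex_bij_witness[where j = "\<lambda>(a, b, c). ((a, \<lambda>l. b l + c l), (b, c))"
            and i = "\<lambda>(p, q). (fst p, fst q, snd q)"])
        (auto simp: splittings_def add.assoc)
    also have "\<dots> = (\<Sum>p\<in>splittings d. \<Sum>q\<in>splittings (snd p). ?t (fst p, fst q, snd q))"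
      using finite_splittings[OF True] finite_splittings_of_splitting[OF True]
      by (intro sum.Sigma[symmetric]) auto
    also have "\<dots> = omul n f (omul n g h) d"
      unfolding omul_eq_sum_splittings[of n f] by (simp add: split_right split_def)
    finally show ?thesis .
  qed
qed

lemma omul_oone_left:
  assumes "finitary f"
  shows "omul n oone f = f"
proof
  fix c
  show "omul n oone f c = f c"
  proof (cases "finite_support c")
    case True
    have "omul n oone f c = (\<Sum>p\<in>splittings c. if p = (\<lambda>_. 0, c) then f c else 0)"
      unfolding omul_eq_sum_splittings
      by (intro sum.cong) (auto simp: oone_def osign_def dest: splittings_sum split: if_splits)
    also have "\<dots> = f c"
      using finite_splittings[OF True] by (simp add: splittings_def)
    finally show ?thesis .
  qed (use assms finitary_omul[of n oone f] in \<open>simp add: finitary_def\<close>)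
qed

lemma omul_oone_right:
  assumes "finitary f"
  shows "omul n f oone = f"
proof
  fix c
  show "omul n f oone c = f c"
  proof (cases "finite_support c")
    case True
    have "omul n f oone c = (\<Sum>p\<in>splittings c. if p = (c, \<lambda>_. 0) then f c else 0)"
      unfolding omul_eq_sum_splittings
      by (intro sum.cong) (auto simp: oone_def osign_def dest: splittings_sum split: if_splits)
    also have "\<dots> = f c"
      using finite_splittings[OF True] by (simp add: splittings_def)
    finally show ?thesis .
  qed (use assms finitary_omul[of n f oone] in \<open>simp add: finitary_def\<close>)
qed

lemma omul_sum_left: "omul n (sum F A) g = (\<Sum>x\<in>A. omul n (F x) g)"
  by (rule ext)
    (simp add: omul_def sum_fun_apply sum_distrib_left sum_distrib_right sum.swap[of _ A] mult_ac)

lemma omul_sum_right: "omul n f (sum G A) = (\<Sum>x\<in>A. omul n f (G x))"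
  by (rule ext)
    (simp add: omul_def sum_fun_apply sum_distrib_left sum_distrib_right sum.swap[of _ A] mult_ac)

lemma omul_zero_left: "omul n 0 g = 0"
  by (rule ext) (simp add: omul_def)

lemma omul_zero_right: "omul n f 0 = 0"
  by (rule ext) (simp add: omul_def)

lemma omul_oscale_left: "omul n (oscale c f) g = oscale c (omul n f g)"
  by (rule ext) (simp add: omul_def oscale_def sum_distrib_left mult_ac)

lemma omul_oscale_right: "omul n f (oscale c g) = oscale c (omul n f g)"
  by (rule ext) (simp add: omul_def oscale_def sum_distrib_left mult_ac)

lemma oscale_sum: "oscale c (sum F A) = (\<Sum>x\<in>A. oscale c (F x))"
  by (rule ext) (simp add: oscale_def sum_fun_apply sum_distrib_left)

lemma oscale_oscale: "oscale c (oscale d f) = oscale (c * d) f"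
  by (simp add: oscale_def mult_ac)

lemma oscale_one: "oscale 1 f = f"
  by (simp add: oscale_def)

lemma oscale_zero: "oscale c 0 = 0"
  by (simp add: oscale_def zero_fun_def)

lemma oscale_neg: "oscale (- c) f = - oscale c f"
  by (rule ext) (simp add: oscale_def)

lemma finitary_oprod: "finitary (oprod n w)"
  by (cases w) (simp_all add: oprod_def finitary_oone finitary_omul)

lemma oprod_append: "oprod n (u @ v) = omul n (oprod n u) (oprod n v)"
  by (induction u) (simp_all add: oprod_def omul_oone_left finitary_oprod[unfolded oprod_def] omul_assoc)

definition strict_words :: "nat \<Rightarrow> nat \<Rightarrow> nat list set" where
  "strict_words n r = {ys. sorted_wrt (<) ys \<and> set ys \<subseteq> {1..n} \<and> length ys = r}"

definition incr_words :: "nat \<Rightarrow> nat \<Rightarrow> nat list set" where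
  "incr_words n m = {xs. sorted xs \<and> set xs \<subseteq> {1..n} \<and> length xs = m}"

lemma finite_strict_words: "finite (strict_words n r)"
  by (rule finite_subset[OF _ finite_lists_length_le[of "{1..n}" r]])
    (auto simp: strict_words_def)

lemma finite_incr_words: "finite (incr_words n m)"
  by (rule finite_subset[OF _ finite_lists_length_le[of "{1..n}" m]])
    (auto simp: incr_words_def)

lemma oe_eq_sum_strict_words: "oe n r = (\<Sum>ys\<in>strict_words n r. oprod n ys)"
proof -
  let ?A = "{S. S \<subseteq> {1..n} \<and> card S = r}"
  have "inj_on sorted_list_of_set ?A"
    by (rule inj_onI) (metis finite_atLeastAtMost finite_subset mem_Collect_eq sorted_list_of_set_inject)
  moreover have "sorted_list_of_set ` ?A = strict_words n r"
  proof (intro equalityI subsetI)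
    fix ys assume "ys \<in> sorted_list_of_set ` ?A"
    then obtain S where S: "S \<subseteq> {1..n}" "card S = r" "ys = sorted_list_of_set S"
      by blast
    moreover from S(1) have "finite S"
      by (rule finite_subset) simp
    ultimately show "ys \<in> strict_words n r"
      by (auto simp: strict_words_def)
  next
    fix ys assume ys: "ys \<in> strict_words n r"
    then have "distinct ys" "sorted ys"
      by (auto simp: strict_words_def strict_sorted_iff)
    then have "ys = sorted_list_of_set (set ys)" and "set ys \<in> ?A"
      using ys by (auto simp: sorted_list_of_set_sort_remdups distinct_remdups_id sorted_sort_id
          strict_words_def distinct_card)
    then show "ys \<in> sorted_list_of_set ` ?A" by blast
  qed
  ultimately show ?thesis
    by (simp add: oe_def osum_eq_sum sum.reindex[symmetric, unfolded comp_def])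
qed

lemma oh_eq_sum_incr_words: "oh n (int m) = (\<Sum>xs\<in>incr_words n m. oprod n (rev xs))"
  by (simp add: oh_def osum_eq_sum incr_words_def conj_ac)

lemma oh_neg: "s < 0 \<Longrightarrow> oh n s = 0"
  by (simp add: oh_def ozero_eq_zero)

lemma oe_eq_zero: "n < r \<Longrightarrow> oe n r = 0"
proof -
  assume "n < r"
  then have "card S \<noteq> r" if "S \<subseteq> {1..n}" for S
    using card_mono[OF finite_atLeastAtMost that] by simp
  then have "{S. S \<subseteq> {1..n} \<and> card S = r} = {}"
    by auto
  then show ?thesis
    by (simp add: oe_def osum_eq_sum del: Collect_empty_eq)
qed

lemma oe_0: "oe n 0 = oone"
proof -
  have "strict_words n 0 = {[]}" by (auto simp: strict_words_def)
  then show ?thesis by (simp add: oe_eq_sum_strict_words oprod_def)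
qed

lemma oh_0: "oh n 0 = oone"
proof -
  have "incr_words n 0 = {[]}" by (auto simp: incr_words_def)
  then show ?thesis using oh_eq_sum_incr_words[of n 0] by (simp add: oprod_def)
qed

lemma finitary_oh: "finitary (oh n s)"
proof (cases "s < 0")
  case True
  then show ?thesis by (simp add: oh_neg finitary_def)
next
  case False
  then have "oh n s = (\<Sum>xs\<in>incr_words n (nat s). oprod n (rev xs))"
    using oh_eq_sum_incr_words[of n "nat s"] by simp
  then show ?thesis
    by (metis finitary_sum finitary_oprod)
qed

lemma sum_eq_neg_if_sign_reversing_involution:
  fixes g :: "'a \<Rightarrow> 'b::ab_group_add"
  assumes "\<And>x. x \<in> S \<Longrightarrow> \<iota> x \<in> S" "\<And>x. x \<in> S \<Longrightarrow> \<iota> (\<iota> x) = x"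
    and "\<And>x. x \<in> S \<Longrightarrow> g (\<iota> x) = - g x"
  shows "sum g S = - sum g S"
proof -
  have "bij_betw \<iota> S S"
    by (rule bij_betw_byWitness[where f' = \<iota>]) (use assms in auto)
  then have "sum g S = sum (g \<circ> \<iota>) S"
    by (simp add: sum.reindex_bij_betw)
  also have "\<dots> = - sum g S"
    using assms(3) by (simp add: sum_negf)
  finally show ?thesis .
qed

lemma opol_eq_zero_if_eq_neg:
  fixes f :: "'k::field opol"
  assumes "(2::'k) \<noteq> 0" "f = - f"
  shows "f = 0"
proof
  fix c
  have "2 * f c = 0"
    using fun_cong[OF assms(2), of c] by simp
  with assms(1) show "f c = 0 c" by simp
qed

lemma alternating_word_sum_eq_zero:
  fixes word :: "'a \<Rightarrow> nat list" and deg :: "'a \<Rightarrow> nat"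
  assumes "(2::'k::field) \<noteq> 0"
    and "\<And>x. x \<in> S \<Longrightarrow> \<iota> x \<in> S" "\<And>x. x \<in> S \<Longrightarrow> \<iota> (\<iota> x) = x"
    and "\<And>x. x \<in> S \<Longrightarrow> word (\<iota> x) = word x"
    and "\<And>x. x \<in> S \<Longrightarrow> deg (\<iota> x) = deg x + 1 \<or> deg x = deg (\<iota> x) + 1"
  shows "(\<Sum>x\<in>S. oscale ((-1) ^ deg x) (oprod n (word x))) = (0 :: 'k opol)"
proof (rule opol_eq_zero_if_eq_neg[OF assms(1)])
  have neg: "oscale ((-1) ^ deg (\<iota> x)) (oprod n (word (\<iota> x))) = - oscale ((-1) ^ deg x) (oprod n (word x))"
    if "x \<in> S" for x
    using assms(4,5)[OF that] by (auto simp: oscale_neg[symmetric])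
  show "(\<Sum>x\<in>S. oscale ((-1) ^ deg x) (oprod n (word x))) = - (\<Sum>x\<in>S. oscale ((-1) ^ deg x) (oprod n (word x)) :: 'k opol)"
    by (rule sum_eq_neg_if_sign_reversing_involution[where g = "\<lambda>x. oscale ((-1) ^ deg x) (oprod n (word x))",
          OF assms(2,3) neg])
qed

definition he_terms :: "nat \<Rightarrow> nat \<Rightarrow> (nat \<times> nat list \<times> nat list) set" where
  "he_terms n q = (SIGMA r:{0..q}. incr_words n (q - r) \<times> strict_words n r)"

lemma mem_he_terms: "(r, xs, ys) \<in> he_terms n q \<longleftrightarrow>
    r \<le> q \<and> sorted xs \<and> set xs \<subseteq> {1..n} \<and> length xs = q - r \<and>
    sorted_wrt (<) ys \<and> set ys \<subseteq> {1..n} \<and> length ys = r"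
  by (auto simp: he_terms_def incr_words_def strict_words_def)

definition he_word :: "nat \<times> nat list \<times> nat list \<Rightarrow> nat list" where
  "he_word = (\<lambda>(r, xs, ys). rev xs @ ys)"

text \<open>In the word \<open>rev xs @ ys\<close> the letter at the junction is moved to whichever side can
  take it: to the weakly decreasing part if it is not larger than the last letter there,
  otherwise to the strictly increasing part.\<close>
definition he_toggle :: "nat \<times> nat list \<times> nat list \<Rightarrow> nat \<times> nat list \<times> nat list" where
  "he_toggle = (\<lambda>(r, xs, ys).
     if ys \<noteq> [] \<and> (xs = [] \<or> hd ys \<le> hd xs) then (r - 1, hd ys # xs, tl ys)
     else (r + 1, tl xs, hd xs # ys))"

lemma he_toggle_to_left:
  assumes "(r, xs, y # ys) \<in> he_terms n q" "xs = [] \<or> y \<le> hd xs"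
  shows "he_toggle (r, xs, y # ys) = (r - 1, y # xs, ys)"
    and "(r - 1, y # xs, ys) \<in> he_terms n q"
    and "he_toggle (r - 1, y # xs, ys) = (r, xs, y # ys)"
    and "1 \<le> r"
proof -
  have ys: "\<forall>z\<in>set ys. y < z" "sorted_wrt (<) ys" and "r \<ge> 1"
    using assms(1) by (auto simp: mem_he_terms)
  have "\<forall>z\<in>set xs. y \<le> z"
    using assms by (cases xs) (auto simp: mem_he_terms)
  then show "(r - 1, y # xs, ys) \<in> he_terms n q"
    using assms(1) by (auto simp: mem_he_terms)
  show "he_toggle (r, xs, y # ys) = (r - 1, y # xs, ys)"
    using assms(2) by (simp add: he_toggle_def)
  have "\<not> (ys \<noteq> [] \<and> hd ys \<le> y)"
    using ys by (cases ys) auto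
  then show "he_toggle (r - 1, y # xs, ys) = (r, xs, y # ys)"
    using \<open>r \<ge> 1\<close> by (simp add: he_toggle_def)
  show "1 \<le> r" by fact
qed

lemma he_toggle_to_right:
  assumes "(r, x # xs, ys) \<in> he_terms n q" "ys = [] \<or> x < hd ys"
  shows "he_toggle (r, x # xs, ys) = (r + 1, xs, x # ys)"
    and "(r + 1, xs, x # ys) \<in> he_terms n q"
    and "he_toggle (r + 1, xs, x # ys) = (r, x # xs, ys)"
proof -
  have xs: "\<forall>z\<in>set xs. x \<le> z"
    using assms(1) by (auto simp: mem_he_terms)
  have "\<forall>z\<in>set ys. x < z"
    using assms by (cases ys) (auto simp: mem_he_terms)
  then show "(r + 1, xs, x # ys) \<in> he_terms n q"
    using assms(1) by (auto simp: mem_he_terms)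
  show "he_toggle (r, x # xs, ys) = (r + 1, xs, x # ys)"
    using assms(2) by (auto simp: he_toggle_def)
  show "he_toggle (r + 1, xs, x # ys) = (r, x # xs, ys)"
    using xs by (cases xs) (auto simp: he_toggle_def)
qed

lemma he_toggle_involution:
  assumes "1 \<le> q" "t \<in> he_terms n q"
  shows "he_toggle t \<in> he_terms n q" "he_toggle (he_toggle t) = t"
    and "he_word (he_toggle t) = he_word t"
    and "fst (he_toggle t) = fst t + 1 \<or> fst t = fst (he_toggle t) + 1"
proof -
  obtain r xs ys where t: "t = (r, xs, ys)" by (cases t)
  consider y ys' where "ys = y # ys'" "xs = [] \<or> y \<le> hd xs"
    | x xs' where "xs = x # xs'" "ys = [] \<or> x < hd ys"
  proof (cases "ys \<noteq> [] \<and> (xs = [] \<or> hd ys \<le> hd xs)")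
    case False
    have "xs \<noteq> []"
      using False assms t by (cases xs) (auto simp: mem_he_terms)
    then show ?thesis using False that(2) by (cases xs; cases ys) auto
  qed (use that(1) in \<open>cases ys; auto\<close>)
  then have "he_toggle t \<in> he_terms n q \<and> he_toggle (he_toggle t) = t
      \<and> he_word (he_toggle t) = he_word t
      \<and> (fst (he_toggle t) = fst t + 1 \<or> fst t = fst (he_toggle t) + 1)"
  proof cases
    case (1 y ys')
    with he_toggle_to_left[of r xs y ys' n q] assms(2) show ?thesis
      unfolding t by (auto simp: he_word_def)
  next
    case (2 x xs')
    with he_toggle_to_right[of r x xs' ys n q] assms(2) show ?thesis
      unfolding t by (auto simp: he_word_def)
  qed
  then show "he_toggle t \<in> he_terms n q" "he_toggle (he_toggle t) = t"
    and "he_word (he_toggle t) = he_word t"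
    and "fst (he_toggle t) = fst t + 1 \<or> fst t = fst (he_toggle t) + 1"
    by simp_all
qed

definition eh_terms :: "nat \<Rightarrow> nat \<Rightarrow> (nat \<times> nat list \<times> nat list) set" where
  "eh_terms n m = (SIGMA t:{0..m}. strict_words n t \<times> incr_words n (m - t))"

lemma mem_eh_terms: "(t, ys, xs) \<in> eh_terms n m \<longleftrightarrow>
    t \<le> m \<and> sorted_wrt (<) ys \<and> set ys \<subseteq> {1..n} \<and> length ys = t \<and>
    sorted xs \<and> set xs \<subseteq> {1..n} \<and> length xs = m - t"
  by (auto simp: eh_terms_def incr_words_def strict_words_def)

definition eh_word :: "nat \<times> nat list \<times> nat list \<Rightarrow> nat list" where
  "eh_word = (\<lambda>(t, ys, xs). ys @ rev xs)"

definition eh_toggle :: "nat \<times> nat list \<times> nat list \<Rightarrow> nat \<times> nat list \<times> nat list" where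
  "eh_toggle = (\<lambda>(t, ys, xs).
     if ys \<noteq> [] \<and> (xs = [] \<or> last xs \<le> last ys) then (t - 1, butlast ys, xs @ [last ys])
     else (t + 1, ys @ [last xs], butlast xs))"

lemma eh_toggle_to_right:
  assumes "(t, ys @ [y], xs) \<in> eh_terms n m" "xs = [] \<or> last xs \<le> y"
  shows "eh_toggle (t, ys @ [y], xs) = (t - 1, ys, xs @ [y])"
    and "(t - 1, ys, xs @ [y]) \<in> eh_terms n m"
    and "eh_toggle (t - 1, ys, xs @ [y]) = (t, ys @ [y], xs)"
    and "1 \<le> t"
proof -
  have ys: "\<forall>z\<in>set ys. z < y" "sorted_wrt (<) ys" and t: "1 \<le> t"
    using assms(1) by (auto simp: mem_eh_terms sorted_wrt_append)
  have "\<forall>z\<in>set xs. z \<le> y"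
    using assms by (cases xs rule: rev_cases) (auto simp: mem_eh_terms sorted_append)
  then show "(t - 1, ys, xs @ [y]) \<in> eh_terms n m"
    using assms(1) t by (auto simp: mem_eh_terms sorted_append sorted_wrt_append)
  show "eh_toggle (t, ys @ [y], xs) = (t - 1, ys, xs @ [y])"
    using assms(2) by (simp add: eh_toggle_def)
  have "\<not> (ys \<noteq> [] \<and> y \<le> last ys)"
    using ys by (cases ys rule: rev_cases) auto
  then show "eh_toggle (t - 1, ys, xs @ [y]) = (t, ys @ [y], xs)"
    using t by (simp add: eh_toggle_def)
  show "1 \<le> t" by (fact t)
qed

lemma eh_toggle_to_left:
  assumes "(t, ys, xs @ [x]) \<in> eh_terms n m" "ys = [] \<or> last ys < x"
  shows "eh_toggle (t, ys, xs @ [x]) = (t + 1, ys @ [x], xs)"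
    and "(t + 1, ys @ [x], xs) \<in> eh_terms n m"
    and "eh_toggle (t + 1, ys @ [x], xs) = (t, ys, xs @ [x])"
proof -
  have xs: "\<forall>z\<in>set xs. z \<le> x"
    using assms(1) by (auto simp: mem_eh_terms sorted_append)
  have "\<forall>z\<in>set ys. z < x"
    using assms by (cases ys rule: rev_cases) (auto simp: mem_eh_terms sorted_wrt_append)
  then show "(t + 1, ys @ [x], xs) \<in> eh_terms n m"
    using assms(1) by (auto simp: mem_eh_terms sorted_append sorted_wrt_append)
  show "eh_toggle (t, ys, xs @ [x]) = (t + 1, ys @ [x], xs)"
    using assms(2) by (auto simp: eh_toggle_def)
  show "eh_toggle (t + 1, ys @ [x], xs) = (t, ys, xs @ [x])"
    using xs by (cases xs rule: rev_cases) (auto simp: eh_toggle_def)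
qed

lemma eh_toggle_involution:
  assumes "1 \<le> m" "p \<in> eh_terms n m"
  shows "eh_toggle p \<in> eh_terms n m" "eh_toggle (eh_toggle p) = p"
    and "eh_word (eh_toggle p) = eh_word p"
    and "fst (eh_toggle p) = fst p + 1 \<or> fst p = fst (eh_toggle p) + 1"
proof -
  obtain t ys xs where p: "p = (t, ys, xs)" by (cases p)
  consider y ys' where "ys = ys' @ [y]" "xs = [] \<or> last xs \<le> y"
    | x xs' where "xs = xs' @ [x]" "ys = [] \<or> last ys < x"
  proof (cases "ys \<noteq> [] \<and> (xs = [] \<or> last xs \<le> last ys)")
    case False
    have "xs \<noteq> []"
      using False assms p by (cases xs) (auto simp: mem_eh_terms)
    then show ?thesis using False that(2)
      by (cases xs rule: rev_cases; cases ys rule: rev_cases) auto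
  qed (use that(1) in \<open>cases ys rule: rev_cases; auto\<close>)
  then have "eh_toggle p \<in> eh_terms n m \<and> eh_toggle (eh_toggle p) = p
      \<and> eh_word (eh_toggle p) = eh_word p
      \<and> (fst (eh_toggle p) = fst p + 1 \<or> fst p = fst (eh_toggle p) + 1)"
  proof cases
    case (1 y ys')
    with eh_toggle_to_right[of t ys' y xs n m] assms(2) show ?thesis
      unfolding p by (auto simp: eh_word_def)
  next
    case (2 x xs')
    with eh_toggle_to_left[of t ys xs' x n m] assms(2) show ?thesis
      unfolding p by (auto simp: eh_word_def)
  qed
  then show "eh_toggle p \<in> eh_terms n m" "eh_toggle (eh_toggle p) = p"
    and "eh_word (eh_toggle p) = eh_word p"
    and "fst (eh_toggle p) = fst p + 1 \<or> fst p = fst (eh_toggle p) + 1"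
    by simp_all
qed

lemma alternating_sum_oh_oe:
  assumes "(2::'k::field) \<noteq> 0" "1 \<le> q"
  shows "(\<Sum>r=0..q. oscale ((-1) ^ r) (omul n (oh n (int q - int r)) (oe n r))) = (0 :: 'k opol)"
proof -
  have "(\<Sum>r=0..q. oscale ((-1) ^ r) (omul n (oh n (int q - int r)) (oe n r)))
      = (\<Sum>r=0..q. \<Sum>(xs, ys)\<in>incr_words n (q - r) \<times> strict_words n r.
           oscale ((-1) ^ r) (oprod n (rev xs @ ys)) :: 'k opol)"
  proof (intro sum.cong refl)
    fix r assume "r \<in> {0..q}"
    then have h: "oh n (int q - int r) = oh n (int (q - r))"
      by (simp add: of_nat_diff)
    show "oscale ((-1) ^ r) (omul n (oh n (int q - int r)) (oe n r))
        = (\<Sum>(xs, ys)\<in>incr_words n (q - r) \<times> strict_words n r. oscale ((-1) ^ r) (oprod n (rev xs @ ys)))"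
      unfolding h oh_eq_sum_incr_words oe_eq_sum_strict_words omul_sum_left
      unfolding omul_sum_right oscale_sum oprod_append sum.cartesian_product
      by (simp add: split_def)
  qed
  also have "\<dots> = (\<Sum>p\<in>he_terms n q. oscale ((-1) ^ fst p) (oprod n (he_word p)))"
    unfolding he_terms_def
    by (subst sum.Sigma) (auto simp: finite_incr_words finite_strict_words split_def he_word_def)
  also have "\<dots> = 0"
    by (rule alternating_word_sum_eq_zero[where \<iota> = he_toggle, OF assms(1)])
      (use he_toggle_involution[OF assms(2)] in auto)
  finally show ?thesis .
qed

lemma alternating_sum_oe_oh:
  assumes "(2::'k::field) \<noteq> 0" "1 \<le> m"
  shows "(\<Sum>t=0..m. oscale ((-1) ^ t) (omul n (oe n t) (oh n (int m - int t)))) = (0 :: 'k opol)"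
proof -
  have "(\<Sum>t=0..m. oscale ((-1) ^ t) (omul n (oe n t) (oh n (int m - int t))))
      = (\<Sum>t=0..m. \<Sum>(ys, xs)\<in>strict_words n t \<times> incr_words n (m - t).
           oscale ((-1) ^ t) (oprod n (ys @ rev xs)) :: 'k opol)"
  proof (intro sum.cong refl)
    fix t assume "t \<in> {0..m}"
    then have h: "oh n (int m - int t) = oh n (int (m - t))"
      by (simp add: of_nat_diff)
    show "oscale ((-1) ^ t) (omul n (oe n t) (oh n (int m - int t)))
        = (\<Sum>(ys, xs)\<in>strict_words n t \<times> incr_words n (m - t). oscale ((-1) ^ t) (oprod n (ys @ rev xs)))"
      unfolding h oh_eq_sum_incr_words oe_eq_sum_strict_words omul_sum_left
      unfolding omul_sum_right oscale_sum oprod_append sum.cartesian_product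
      by (simp add: split_def)
  qed
  also have "\<dots> = (\<Sum>p\<in>eh_terms n m. oscale ((-1) ^ fst p) (oprod n (eh_word p)))"
    unfolding eh_terms_def
    by (subst sum.Sigma) (auto simp: finite_incr_words finite_strict_words split_def eh_word_def)
  also have "\<dots> = 0"
    by (rule alternating_word_sum_eq_zero[where \<iota> = eh_toggle, OF assms(1)])
      (use eh_toggle_involution[OF assms(2)] in auto)
  finally show ?thesis .
qed

lemma oh_recurrence:
  assumes "(2::'k::field) \<noteq> 0" "1 \<le> q"
  shows "oh n (int q) = (\<Sum>r=1..n. oscale ((-1) ^ (r - 1)) (omul n (oh n (int q - int r)) (oe n r)) :: 'k opol)"
proof -
  define T where "T r = (oscale ((-1) ^ r) (omul n (oh n (int q - int r)) (oe n r)) :: 'k opol)" for r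
  have "sum T {0..n} = sum T {0..max n q}"
    by (rule sum.mono_neutral_left) (auto simp: T_def oe_eq_zero omul_zero_right oscale_zero)
  also have "\<dots> = sum T {0..q}"
    by (rule sum.mono_neutral_right) (auto simp: T_def oh_neg omul_zero_left oscale_zero)
  also have "\<dots> = 0"
    unfolding T_def by (rule alternating_sum_oh_oe[OF assms])
  finally have "T 0 = - sum T {1..n}"
    by (simp add: sum.atLeast_Suc_atMost eq_neg_iff_add_eq_0)
  moreover have "T 0 = oh n (int q)"
    by (simp add: T_def oscale_one oe_0 omul_oone_right finitary_oh)
  moreover have "- T r = oscale ((-1) ^ (r - 1)) (omul n (oh n (int q - int r)) (oe n r))" if "1 \<le> r" for r
    using that by (cases r) (simp_all add: T_def oscale_neg[symmetric])
  ultimately show ?thesis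
    by (simp add: sum_negf[symmetric])
qed

text \<open>\<open>oc n i j k\<close> depends on \<open>j\<close> and \<open>k\<close> only through \<open>m = k + j - i\<close>, and its truncation
  \<open>t \<le> min m (n - i)\<close> can be relaxed to \<open>t \<le> n - i\<close> because \<open>h\<close> vanishes in negative degrees.\<close>
definition oc_sum :: "nat \<Rightarrow> nat \<Rightarrow> int \<Rightarrow> 'k::field opol" where
  "oc_sum n i m = (\<Sum>t=0..n - i. oscale ((-1) ^ t) (omul n (oe n t) (oh n (m - int t))))"

lemma oc_eq_oc_sum:
  assumes "i \<le> n"
  shows "oc n i j k = (oc_sum n i (int k + int j - int i) :: 'k::field opol)"
proof -
  define m where "m = int k + int j - int i"
  define f where "f t = (oscale ((-1) ^ nat t) (omul n (oe n (nat t)) (oh n (m - t))) :: 'k opol)" for t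
  have "oc n i j k = sum f {0..min m (int n - int i)}"
    by (simp add: oc_def osum_eq_sum f_def m_def)
  also have "\<dots> = sum f {0..int n - int i}"
    by (rule sum.mono_neutral_left) (auto simp: f_def oh_neg omul_zero_right oscale_zero)
  also have "{0..int n - int i} = int ` {0..n - i}"
    using assms by (simp add: image_int_atLeastAtMost of_nat_diff)
  also have "sum f (int ` {0..n - i}) = sum (f \<circ> int) {0..n - i}"
    by (simp add: sum.reindex)
  also have "\<dots> = oc_sum n i m"
    by (simp add: oc_sum_def f_def)
  finally show ?thesis by (simp add: m_def)
qed

lemma oc_sum_eq_alternating_sum:
  assumes "m \<le> n - i"
  shows "oc_sum n i (int m) = (\<Sum>t=0..m. oscale ((-1) ^ t) (omul n (oe n t) (oh n (int m - int t))))"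
  unfolding oc_sum_def
  by (rule sum.mono_neutral_right) (use assms in \<open>auto simp: oh_neg omul_zero_right oscale_zero\<close>)

lemma oc_eq_zero_below_diagonal:
  assumes "int k < int i - int j"
  shows "oc n i j k = ozero"
proof -
  have "{0..min (int k + int j - int i) (int n - int i)} = {}"
    using assms by auto
  then show ?thesis by (simp add: oc_def osum_def ozero_def)
qed

lemma oc_eq_one_on_diagonal:
  assumes "int k = int i - int j" "i \<le> n"
  shows "oc n i j k = oone"
proof -
  have "{0..min (int k + int j - int i) (int n - int i)} = {0}"
    using assms by auto
  then show ?thesis
    using assms by (simp add: oc_def osum_eq_sum oscale_one oe_0 oh_0 omul_oone_left finitary_oone)
qed

lemma oc_Suc_col: "oc n i (Suc j) k = oc n i j (Suc k)"
  unfolding oc_def by (simp add: algebra_simps)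

lemma finitary_oc: "finitary (oc n i j k)"
  unfolding oc_def osum_eq_sum by (intro finitary_sum finitary_oscale finitary_omul)

lemma omatpow_Suc_entry:
  "omatpow n A (Suc k) i j = (\<Sum>l=1..n. omul n (omatpow n A k i l) (A l j))"
  by (simp add: omatmul_def osum_eq_sum)

lemma ocomp_pow_0:
  assumes "(2::'k::field) \<noteq> 0" "1 \<le> i" "i \<le> n" "1 \<le> j" "j \<le> n"
  shows "omatpow n (ocomp n) 0 i j = (oc n i j 0 :: 'k opol)"
proof (cases i j rule: linorder_cases)
  case less
  have "oc n i j 0 = (oc_sum n i (int (j - i)) :: 'k opol)"
    using assms less by (simp add: oc_eq_oc_sum of_nat_diff)
  also have "\<dots> = (\<Sum>t=0..j - i. oscale ((-1) ^ t) (omul n (oe n t) (oh n (int (j - i) - int t))))"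
    by (rule oc_sum_eq_alternating_sum) (use assms in simp)
  also have "\<dots> = 0"
    by (rule alternating_sum_oe_oh) (use assms less in simp_all)
  finally show ?thesis
    using less by (simp add: omatid_def ozero_eq_zero)
qed (use assms in \<open>simp_all add: omatid_def oc_eq_one_on_diagonal oc_eq_zero_below_diagonal\<close>)

lemma ocomp_column_sum:
  assumes "1 \<le> j" "j < n"
  shows "(\<Sum>l=1..n. omul n (F l) (ocomp n l j)) = omul n (F (Suc j)) oone"
proof -
  have "(\<Sum>l=1..n. omul n (F l) (ocomp n l j)) = (\<Sum>l=1..n. if l = Suc j then omul n (F (Suc j)) oone else 0)"
    using assms by (intro sum.cong) (auto simp: ocomp_def ozero_eq_zero omul_zero_right)
  then show ?thesis
    using assms by simp
qed

lemma omul_oc_sum: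
  "omul n (oc_sum n i m) (oscale c (oe n r)) =
     (\<Sum>t=0..n - i. oscale (c * (-1) ^ t) (omul n (oe n t) (omul n (oh n (m - int t)) (oe n r))))"
  by (simp add: oc_sum_def omul_sum_left omul_oscale_left omul_oscale_right omul_assoc oscale_sum
      oscale_oscale mult_ac)

lemma oc_last_column_step:
  assumes "(2::'k::field) \<noteq> 0" "1 \<le> i" "i \<le> n"
  shows "(\<Sum>l=1..n. omul n (oc n i l k) (ocomp n l n)) = (oc n i n (Suc k) :: 'k opol)"
proof -
  define X where "X t r = (oscale ((-1) ^ (r - 1) * (-1) ^ t)
      (omul n (oe n t) (omul n (oh n (int (Suc k + n - i - t) - int r)) (oe n r))) :: 'k opol)" for t r
  have "(\<Sum>l=1..n. omul n (oc n i l k) (ocomp n l n))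
      = (\<Sum>l=1..n. omul n (oc n i (n + 1 - l) k) (ocomp n (n + 1 - l) n))"
    using sum.atLeastAtMost_rev[of _ 1 n] by simp
  also have "\<dots> = (\<Sum>r=1..n. \<Sum>t=0..n - i. X t r)"
  proof (intro sum.cong refl)
    fix r assume r: "r \<in> {1..n}"
    have "oc n i (n + 1 - r) k = (oc_sum n i (int k + int (n + 1 - r) - int i) :: 'k opol)"
      using assms by (simp add: oc_eq_oc_sum)
    moreover have "ocomp n (n + 1 - r) n = (oscale ((-1) ^ (r - 1)) (oe n r) :: 'k opol)"
      using r by (simp add: ocomp_def)
    ultimately show "omul n (oc n i (n + 1 - r) k) (ocomp n (n + 1 - r) n) = (\<Sum>t=0..n - i. X t r)"
      using r assms by (auto simp: omul_oc_sum X_def of_nat_diff intro!: sum.cong) (simp add: algebra_simps)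
  qed
  also have "\<dots> = (\<Sum>t=0..n - i. \<Sum>r=1..n. X t r)"
    by (rule sum.swap)
  also have "\<dots> = (\<Sum>t=0..n - i. oscale ((-1) ^ t) (omul n (oe n t) (oh n (int (Suc k + n - i - t)))))"
  proof (intro sum.cong refl)
    fix t assume "t \<in> {0..n - i}"
    define q where "q = Suc k + n - i - t"
    have "1 \<le> q"
      using \<open>t \<in> {0..n - i}\<close> assms(3) by (simp add: q_def)
    have "(\<Sum>r=1..n. X t r) = oscale ((-1) ^ t) (omul n (oe n t)
        (\<Sum>r=1..n. oscale ((-1) ^ (r - 1)) (omul n (oh n (int q - int r)) (oe n r))))"
      unfolding X_def q_def[symmetric] omul_sum_right omul_oscale_right oscale_sum oscale_oscale
      by (simp only: mult.commute)
    also have "\<dots> = oscale ((-1) ^ t) (omul n (oe n t) (oh n (int q)))"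
      by (simp only: oh_recurrence[OF assms(1) \<open>1 \<le> q\<close>, symmetric])
    finally show "(\<Sum>r=1..n. X t r) = oscale ((-1) ^ t) (omul n (oe n t) (oh n (int (Suc k + n - i - t))))"
      by (simp only: q_def)
  qed
  also have "\<dots> = oc n i n (Suc k)"
    using assms by (auto simp: oc_eq_oc_sum oc_sum_def of_nat_diff intro!: sum.cong)
      (simp add: algebra_simps)
  finally show ?thesis .
qed

lemma ocomp_pow_eq_oc:
  assumes "(2::'k::field) \<noteq> 0" "1 \<le> i" "i \<le> n" "1 \<le> j" "j \<le> n"
  shows "omatpow n (ocomp n :: 'k omat) k i j = oc n i j k"
  using assms(4,5)
proof (induction k arbitrary: j)
  case 0
  then show ?case using ocomp_pow_0[OF assms(1)] assms(2,3) by blast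
next
  case (Suc k)
  show ?case
  proof (cases "j < n")
    case True
    have "omatpow n (ocomp n :: 'k omat) (Suc k) i j = (\<Sum>l=1..n. omul n (omatpow n (ocomp n) k i l) (ocomp n l j))"
      by (rule omatpow_Suc_entry)
    also have "\<dots> = omul n (omatpow n (ocomp n) k i (Suc j)) oone"
      by (rule ocomp_column_sum) (use Suc True in auto)
    also have "\<dots> = oc n i j (Suc k)"
      using Suc True by (simp add: omul_oone_right finitary_oc oc_Suc_col)
    finally show ?thesis .
  next
    case False
    then show ?thesis
      using Suc assms(2,3) oc_last_column_step[OF assms(1)]
      unfolding omatpow_Suc_entry by simp
  qed
qed

theorem mainTheorem11:
  fixes n :: nat
  assumes "n \<ge> 1" and "(2::'k::field) \<noteq> 0"
  shows "\<forall>i j k. 1 \<le> i \<and> i \<le> n \<and> 1 \<le> j \<and> j \<le> n \<longrightarrow>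
           omatpow n (ocomp n :: 'k omat) k i j = oc n i j k \<and>
           (int k < int i - int j \<longrightarrow> (oc n i j k :: 'k opol) = ozero) \<and>
           (int k = int i - int j \<longrightarrow> (oc n i j k :: 'k opol) = oone)"
  using ocomp_pow_eq_oc[OF assms(2)] oc_eq_zero_below_diagonal oc_eq_one_on_diagonal by auto

end
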